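(* Let $\alpha\in(0,1)$ and $\nu\in\mathbb{N}$ with $2\nu>1/(1-\alpha)$, and let $K_{\alpha,\nu}(x)=\sum_{k=0}^{\infty}2^{-2\alpha\nu k}\phi(2^{2\nu k}x)$, where $\phi$ is the $2$-periodic function with $\phi(x)=|x|$ on $[-1,1]$. Then for every $M\ge 1$ and every $m\in\mathbb{N}$, \[ \frac{1}{2M}\int_{-M}^{M}\left|\frac{K_{\alpha,\nu}(x+2^{-2\nu m-1})-K_{\alpha,\nu}(x)}{2^{-2\nu m-1}}\right|dx\ \ge\ \frac14\,K(m,\nu,\alpha,1), \] where $K(m,\nu,\alpha,1)=\dfrac{2^{2\nu(1-\alpha)}-2}{2^{2\nu(1-\alpha)}-1}\big(2^{2\nu(1-\alpha)}\big)^{m}$. *)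

theory Defs
  imports "HOL-Analysis.Analysis"
begin

text \<open>The 2-periodic function with phi x = |x| on [-1,1]: distance from x to the
  even integer 2 * floor((x+1)/2).\<close>
definition phi :: "real \<Rightarrow> real" where
  "phi x = \<bar>x - 2 * real_of_int \<lfloor>(x + 1) / 2\<rfloor>\<bar>"

definition K_fun :: "real \<Rightarrow> nat \<Rightarrow> real \<Rightarrow> real" where
  "K_fun \<alpha> \<nu> x = (\<Sum>k. 2 powr (- 2 * \<alpha> * real \<nu> * real k) * phi (2 ^ (2 * \<nu> * k) * x))"

definition K_const :: "nat \<Rightarrow> nat \<Rightarrow> real \<Rightarrow> real" where
  "K_const m \<nu> \<alpha> =
     (2 powr (2 * real \<nu> * (1 - \<alpha>)) - 2) / (2 powr (2 * real \<nu> * (1 - \<alpha>)) - 1)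
     * (2 powr (2 * real \<nu> * (1 - \<alpha>))) ^ m"

end

theory Submission
  imports Defs
begin

text \<open>Write \<open>c = 2 powr (2\<nu>(1 - \<alpha>))\<close> and \<open>h = 2^-(2\<nu>m+1)\<close>. For \<open>k > m\<close> the rescaled
  step \<open>2^(2\<nu>k) h\<close> is an even integer, so those terms of the series do not change and the
  difference quotient is a finite sum. Since phi is 1-Lipschitz, the \<open>k\<close>-th term contributes at
  most \<open>c^k\<close>; but on the left half of every cell \<open>[j, j + 1] / 2^(2\<nu>m)\<close> phi is affine across
  the step, so the \<open>m\<close>-th term contributes exactly \<open>c^m\<close>. There the quotient is at least
  \<open>c^m - (c^m - 1)/(c - 1) \<ge> K(m,\<nu>,\<alpha>,1)\<close>, and these half-cells cover at least a quarter
  of \<open>[-M, M]\<close> when \<open>M \<ge> 1\<close>.\<close>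

lemma phi_abs_floor_le_1: "\<bar>x - 2 * real_of_int \<lfloor>(x + 1) / 2\<rfloor>\<bar> \<le> 1"
proof -
  have "2 * real_of_int \<lfloor>(x + 1) / 2\<rfloor> \<le> x + 1" "x + 1 < 2 * real_of_int \<lfloor>(x + 1) / 2\<rfloor> + 2"
    using of_int_floor_le[of "(x + 1) / 2"] real_of_int_floor_add_one_gt[of "(x + 1) / 2"]
    by (simp_all add: field_simps)
  then show ?thesis
    unfolding abs_le_iff by (intro conjI) linarith+
qed

lemma phi_nonneg: "0 \<le> phi x"
  by (simp add: phi_def)

lemma phi_le_1: "phi x \<le> 1"
  using phi_abs_floor_le_1 by (simp add: phi_def)

lemma phi_eq_abs_diff_even:
  assumes "\<bar>x - 2 * real_of_int n\<bar> \<le> 1"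
  shows "phi x = \<bar>x - 2 * real_of_int n\<bar>"
proof -
  define n0 where "n0 = \<lfloor>(x + 1) / 2\<rfloor>"
  have n0: "\<bar>x - 2 * real_of_int n0\<bar> \<le> 1"
    using phi_abs_floor_le_1 unfolding n0_def .
  have "\<bar>real_of_int (n - n0)\<bar> \<le> 1"
    using assms n0 by linarith
  then consider "n = n0" | "n = n0 + 1" | "n = n0 - 1"
    by linarith
  then have "\<bar>x - 2 * real_of_int n\<bar> = \<bar>x - 2 * real_of_int n0\<bar>"
  proof cases
    case 2
    then have "x = 2 * real_of_int n0 + 1"
      using assms n0 unfolding abs_le_iff by simp
    with 2 show ?thesis by simp
  next
    case 3
    then have "x = 2 * real_of_int n0 - 1"
      using assms n0 unfolding abs_le_iff by simp
    with 3 show ?thesis by simp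
  qed simp
  then show ?thesis
    unfolding phi_def n0_def by simp
qed

lemma phi_le_abs_diff_even: "phi x \<le> \<bar>x - 2 * real_of_int n\<bar>"
  using phi_eq_abs_diff_even[of x n] phi_le_1[of x] by linarith

lemma phi_lipschitz: "\<bar>phi x - phi y\<bar> \<le> \<bar>x - y\<bar>"
proof -
  have "phi x \<le> \<bar>x - 2 * real_of_int \<lfloor>(y + 1) / 2\<rfloor>\<bar>" "phi y \<le> \<bar>y - 2 * real_of_int \<lfloor>(x + 1) / 2\<rfloor>\<bar>"
    by (rule phi_le_abs_diff_even)+
  then show ?thesis unfolding phi_def by linarith
qed

lemma phi_add_even: "phi (x + 2 * real_of_int n) = phi x"
proof -
  have "phi (x + 2 * real_of_int n) = \<bar>x + 2 * real_of_int n - 2 * real_of_int (\<lfloor>(x + 1) / 2\<rfloor> + n)\<bar>"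
    using phi_abs_floor_le_1[of x] by (intro phi_eq_abs_diff_even) simp
  then show ?thesis unfolding phi_def by simp
qed

lemma continuous_on_phi: "continuous_on S phi"
proof -
  have "1-lipschitz_on S phi"
    by (rule lipschitz_onI) (auto simp: dist_real_def phi_lipschitz)
  then show ?thesis by (rule lipschitz_on_continuous_on)
qed

lemma continuous_on_phi_comp [continuous_intros]:
  "continuous_on S f \<Longrightarrow> continuous_on S (\<lambda>x. phi (f x))"
  using continuous_on_compose2[OF continuous_on_phi[of UNIV], of S f] by auto

lemma phi_half_step:
  assumes "real_of_int j \<le> y" "y \<le> real_of_int j + 1/2"
  shows "\<bar>phi (y + 1/2) - phi y\<bar> = 1/2"
proof -
  obtain n where n: "j = 2 * n \<or> j = 2 * n - 1"
    by (metis evenE oddE add_diff_cancel_right')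
  then have "phi y = \<bar>y - 2 * real_of_int n\<bar>" "phi (y + 1/2) = \<bar>y + 1/2 - 2 * real_of_int n\<bar>"
    using assms by (auto intro!: phi_eq_abs_diff_even)
  then show ?thesis
    using n assms by auto
qed

lemma integral_ge_half_periods:
  fixes f :: "real \<Rightarrow> real"
  assumes int: "\<And>a b. f integrable_on {a..b}" and nonneg: "\<And>x. 0 \<le> f x" and "0 < q"
    and bound: "\<And>(j::int) x. real_of_int j * q \<le> x \<Longrightarrow> x \<le> (real_of_int j + 1/2) * q \<Longrightarrow> C \<le> f x"
  shows "real n * (C * q / 2) \<le> integral {real_of_int j * q .. (real_of_int j + real n) * q} f"
proof (induction n arbitrary: j)
  case (Suc n)
  let ?a = "real_of_int j * q" and ?b = "(real_of_int j + 1/2) * q"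
    and ?c = "(real_of_int j + 1) * q" and ?d = "(real_of_int j + real (Suc n)) * q"
  have "integral {?a..?b} (\<lambda>_. C) \<le> integral {?a..?b} f"
    using int bound by (intro integral_le) auto
  moreover have "integral {?a..?b} (\<lambda>_. C) = C * q / 2"
    using \<open>0 < q\<close> by (simp add: field_simps)
  moreover have "0 \<le> integral {?b..?c} f"
    using int nonneg by (intro integral_nonneg) auto
  moreover have "integral {?a..?b} f + integral {?b..?c} f = integral {?a..?c} f"
    using \<open>0 < q\<close> int by (intro Henstock_Kurzweil_Integration.integral_combine) auto
  moreover have "integral {?a..?c} f + integral {?c..?d} f = integral {?a..?d} f"
    using \<open>0 < q\<close> int by (intro Henstock_Kurzweil_Integration.integral_combine) (auto simp: field_simps)
  moreover have "real n * (C * q / 2) \<le> integral {?c..?d} f"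
    using Suc.IH[of "j + 1"] by (simp add: algebra_simps)
  moreover have "real (Suc n) * (C * q / 2) = C * q / 2 + real n * (C * q / 2)"
    by (simp add: algebra_simps)
  ultimately show ?case
    by linarith
qed simp

lemma integral_symmetric_ge_half_periods:
  fixes f :: "real \<Rightarrow> real"
  assumes int: "\<And>a b. f integrable_on {a..b}" and nonneg: "\<And>x. 0 \<le> f x" and "0 < q" "q \<le> M" "0 \<le> C"
    and bound: "\<And>(j::int) x. real_of_int j * q \<le> x \<Longrightarrow> x \<le> (real_of_int j + 1/2) * q \<Longrightarrow> C \<le> f x"
  shows "C * M / 2 \<le> integral {-M..M} f"
proof -
  define N where "N = \<lfloor>M / q\<rfloor>"
  have "1 \<le> M / q"
    using \<open>0 < q\<close> \<open>q \<le> M\<close> by simp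
  then have N: "1 \<le> N" "real_of_int N \<le> M / q" "M / q < real_of_int N + 1"
    unfolding N_def by linarith+
  then have "real_of_int N * q \<le> M" "M < real_of_int N * q + q" "q \<le> real_of_int N * q"
    using \<open>0 < q\<close> by (simp_all add: field_simps)
  then have NqM: "real_of_int N * q \<le> M" "M \<le> 2 * (real_of_int N * q)"
    by linarith+
  have "real (nat (2 * N)) * (C * q / 2)
      \<le> integral {real_of_int (-N) * q .. (real_of_int (-N) + real (nat (2 * N))) * q} f"
    by (rule integral_ge_half_periods[OF int nonneg \<open>0 < q\<close> bound])
  then have "real_of_int N * q * C \<le> integral {- (real_of_int N * q) .. real_of_int N * q} f"
    using N by (simp add: algebra_simps)
  also have "\<dots> \<le> integral {-M..M} f"
    using NqM int nonneg by (intro integral_subset_le) auto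
  finally have "real_of_int N * q * C \<le> integral {-M..M} f" .
  moreover have "C * M / 2 \<le> real_of_int N * q * C"
    using mult_right_mono[OF NqM(2) \<open>0 \<le> C\<close>] by (simp add: algebra_simps)
  ultimately show ?thesis
    by linarith
qed

definition K_term :: "real \<Rightarrow> nat \<Rightarrow> nat \<Rightarrow> real \<Rightarrow> real" where
  "K_term \<alpha> \<nu> k x = 2 powr (- 2 * \<alpha> * real \<nu> * real k) * phi (2 ^ (2 * \<nu> * k) * x)"

definition K_ratio :: "real \<Rightarrow> nat \<Rightarrow> real" where
  "K_ratio \<alpha> \<nu> = 2 powr (2 * real \<nu> * (1 - \<alpha>))"

lemma K_fun_eq_suminf: "K_fun \<alpha> \<nu> x = (\<Sum>k. K_term \<alpha> \<nu> k x)"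
  by (simp add: K_fun_def K_term_def)

lemma powr_mult_real_nat: "0 < x \<Longrightarrow> x powr (e * real k) = (x powr e) ^ k"
  by (simp add: powr_realpow[symmetric] powr_powr)

lemma K_weight_mul_frequency:
  "2 powr (- 2 * \<alpha> * real \<nu> * real k) * 2 ^ (2 * \<nu> * k) = K_ratio \<alpha> \<nu> ^ k"
proof -
  have "(2::real) ^ (2 * \<nu> * k) = 2 powr (2 * real \<nu> * real k)"
    using powr_realpow[of 2 "2 * \<nu> * k"] by simp
  then have "2 powr (- 2 * \<alpha> * real \<nu> * real k) * 2 ^ (2 * \<nu> * k)
      = (2::real) powr ((2 * real \<nu> * (1 - \<alpha>)) * real k)"
    by (simp add: algebra_simps flip: powr_add)
  then show ?thesis
    by (simp add: K_ratio_def powr_mult_real_nat)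
qed

lemma K_term_diff_le:
  "\<bar>K_term \<alpha> \<nu> k (x + h) - K_term \<alpha> \<nu> k x\<bar> \<le> K_ratio \<alpha> \<nu> ^ k * \<bar>h\<bar>"
proof -
  have "\<bar>K_term \<alpha> \<nu> k (x + h) - K_term \<alpha> \<nu> k x\<bar>
      = 2 powr (- 2 * \<alpha> * real \<nu> * real k) * \<bar>phi (2 ^ (2 * \<nu> * k) * x + 2 ^ (2 * \<nu> * k) * h) - phi (2 ^ (2 * \<nu> * k) * x)\<bar>"
    by (simp add: K_term_def abs_mult distrib_left flip: right_diff_distrib)
  also have "\<dots> \<le> 2 powr (- 2 * \<alpha> * real \<nu> * real k) * (2 ^ (2 * \<nu> * k) * \<bar>h\<bar>)"
    using phi_lipschitz[of "2 ^ (2 * \<nu> * k) * x + 2 ^ (2 * \<nu> * k) * h" "2 ^ (2 * \<nu> * k) * x"]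
    by (intro mult_left_mono) (auto simp: abs_mult)
  also have "\<dots> = K_ratio \<alpha> \<nu> ^ k * \<bar>h\<bar>"
    using K_weight_mul_frequency[of \<alpha> \<nu> k] by (metis mult.assoc)
  finally show ?thesis .
qed

lemma K_term_half_step:
  assumes "real_of_int j \<le> 2 ^ (2 * \<nu> * k) * x" "2 ^ (2 * \<nu> * k) * x \<le> real_of_int j + 1/2"
    and "2 ^ (2 * \<nu> * k) * h = 1/2"
  shows "\<bar>K_term \<alpha> \<nu> k (x + h) - K_term \<alpha> \<nu> k x\<bar> = K_ratio \<alpha> \<nu> ^ k * h"
proof -
  have "\<bar>K_term \<alpha> \<nu> k (x + h) - K_term \<alpha> \<nu> k x\<bar>
      = 2 powr (- 2 * \<alpha> * real \<nu> * real k) * \<bar>phi (2 ^ (2 * \<nu> * k) * x + 2 ^ (2 * \<nu> * k) * h) - phi (2 ^ (2 * \<nu> * k) * x)\<bar>"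
    by (simp add: K_term_def abs_mult distrib_left flip: right_diff_distrib)
  also have "\<dots> = 2 powr (- 2 * \<alpha> * real \<nu> * real k) * (2 ^ (2 * \<nu> * k) * h)"
    unfolding assms(3) using phi_half_step[OF assms(1,2)] by simp
  also have "\<dots> = K_ratio \<alpha> \<nu> ^ k * h"
    using K_weight_mul_frequency[of \<alpha> \<nu> k] by (metis mult.assoc)
  finally show ?thesis .
qed

lemma K_term_diff_eq_0:
  assumes "2 ^ (2 * \<nu> * k) * h = 2 * real_of_int n"
  shows "K_term \<alpha> \<nu> k (x + h) - K_term \<alpha> \<nu> k x = 0"
  using assms phi_add_even[of "2 ^ (2 * \<nu> * k) * x" n] by (simp add: K_term_def distrib_left)

lemma summable_K_term:
  assumes "0 < \<alpha>" "0 < \<nu>"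
  shows "summable (\<lambda>k. K_term \<alpha> \<nu> k x)"
proof (rule summable_comparison_test)
  define r where "r = (2::real) powr (- 2 * \<alpha> * real \<nu>)"
  have "r < 1"
    unfolding r_def using assms by (intro powr_less_one) auto
  then show "summable (\<lambda>k. r ^ k)"
    by (intro summable_geometric) (simp add: r_def)
  have "norm (K_term \<alpha> \<nu> k x) \<le> r ^ k" for k
  proof -
    have "norm (K_term \<alpha> \<nu> k x) = r ^ k * phi (2 ^ (2 * \<nu> * k) * x)"
      using phi_nonneg by (simp add: K_term_def r_def flip: powr_mult_real_nat)
    also have "\<dots> \<le> r ^ k"
      using phi_le_1 by (simp add: r_def mult_left_le)
    finally show ?thesis .
  qed
  then show "\<exists>N. \<forall>k\<ge>N. norm (K_term \<alpha> \<nu> k x) \<le> r ^ k"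
    by blast
qed

lemma continuous_on_K_term [continuous_intros]:
  "continuous_on S f \<Longrightarrow> continuous_on S (\<lambda>x. K_term \<alpha> \<nu> k (f x))"
  unfolding K_term_def by (intro continuous_intros)

lemma K_fun_diff_eq_sum:
  fixes m :: nat
  assumes "0 < \<alpha>" "0 < \<nu>"
  defines "h \<equiv> 1 / 2 ^ (2 * \<nu> * m + 1) :: real"
  shows "K_fun \<alpha> \<nu> (x + h) - K_fun \<alpha> \<nu> x = (\<Sum>k<Suc m. K_term \<alpha> \<nu> k (x + h) - K_term \<alpha> \<nu> k x)"
proof -
  have "K_fun \<alpha> \<nu> (x + h) - K_fun \<alpha> \<nu> x = (\<Sum>k. K_term \<alpha> \<nu> k (x + h) - K_term \<alpha> \<nu> k x)"
    unfolding K_fun_eq_suminf using summable_K_term[OF assms(1,2)] by (intro suminf_diff)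
  also have "\<dots> = (\<Sum>k<Suc m. K_term \<alpha> \<nu> k (x + h) - K_term \<alpha> \<nu> k x)"
  proof (rule suminf_finite)
    fix k assume "k \<notin> {..<Suc m}"
    then have "2 * \<nu> * Suc m \<le> 2 * \<nu> * k"
      by (intro mult_le_mono2) simp
    then have "2 * \<nu> * m + 2 \<le> 2 * \<nu> * k"
      using assms(2) by simp
    then obtain d where "2 * \<nu> * k = (2 * \<nu> * m + 1) + 1 + d"
      by (metis add.assoc le_Suc_ex one_add_one)
    then have "(2::real) ^ (2 * \<nu> * k) = 2 ^ (2 * \<nu> * m + 1) * (2 * 2 ^ d)"
      by (simp add: power_add)
    then have "2 ^ (2 * \<nu> * k) * h = 2 * real_of_int (2 ^ d)"
      by (simp add: h_def)
    then show "K_term \<alpha> \<nu> k (x + h) - K_term \<alpha> \<nu> k x = 0"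
      by (rule K_term_diff_eq_0)
  qed simp
  finally show ?thesis .
qed

lemma power_diff_geometric_sum_ge:
  fixes c :: real
  assumes "2 < c"
  shows "(c - 2) / (c - 1) * c ^ m \<le> c ^ m - (\<Sum>k<m. c ^ k)"
proof (rule mult_left_le_imp_le)
  show "0 < c - 1"
    using assms by simp
  have "(c - 1) * ((c - 2) / (c - 1) * c ^ m) = (c - 2) * c ^ m"
    using assms by simp
  also have "\<dots> \<le> (c - 1) * c ^ m - (c ^ m - 1)"
    by (simp add: algebra_simps)
  also have "\<dots> = (c - 1) * (c ^ m - (\<Sum>k<m. c ^ k))"
    by (simp add: power_diff_1_eq right_diff_distrib)
  finally show "(c - 1) * ((c - 2) / (c - 1) * c ^ m) \<le> (c - 1) * (c ^ m - (\<Sum>k<m. c ^ k))" .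
qed

lemma K_fun_diff_quotient_ge:
  fixes m :: nat and j :: int
  assumes "0 < \<alpha>" "0 < \<nu>"
    and x: "real_of_int j * (1 / 2 ^ (2 * \<nu> * m)) \<le> x" "x \<le> (real_of_int j + 1/2) * (1 / 2 ^ (2 * \<nu> * m))"
  defines "h \<equiv> 1 / 2 ^ (2 * \<nu> * m + 1) :: real"
  shows "K_ratio \<alpha> \<nu> ^ m - (\<Sum>k<m. K_ratio \<alpha> \<nu> ^ k) \<le> \<bar>(K_fun \<alpha> \<nu> (x + h) - K_fun \<alpha> \<nu> x) / h\<bar>"
proof -
  let ?c = "K_ratio \<alpha> \<nu>" and ?D = "\<lambda>k. K_term \<alpha> \<nu> k (x + h) - K_term \<alpha> \<nu> k x"
  have "0 < h"
    by (simp add: h_def)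
  have "real_of_int j \<le> 2 ^ (2 * \<nu> * m) * x" "2 ^ (2 * \<nu> * m) * x \<le> real_of_int j + 1/2"
    using x by (simp_all add: field_simps)
  moreover have "2 ^ (2 * \<nu> * m) * h = 1/2"
    by (simp add: h_def)
  ultimately have top: "\<bar>?D m\<bar> = ?c ^ m * h"
    by (rule K_term_half_step)
  have "\<bar>\<Sum>k<m. ?D k\<bar> \<le> (\<Sum>k<m. \<bar>?D k\<bar>)"
    by (rule sum_abs)
  also have "\<dots> \<le> (\<Sum>k<m. ?c ^ k * h)"
    using K_term_diff_le \<open>0 < h\<close> by (intro sum_mono) (metis abs_of_pos)
  finally have low: "\<bar>\<Sum>k<m. ?D k\<bar> \<le> (\<Sum>k<m. ?c ^ k) * h"
    by (simp add: sum_distrib_right)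
  have "K_fun \<alpha> \<nu> (x + h) - K_fun \<alpha> \<nu> x = (\<Sum>k<Suc m. ?D k)"
    unfolding h_def by (rule K_fun_diff_eq_sum[OF assms(1,2)])
  then have "K_fun \<alpha> \<nu> (x + h) - K_fun \<alpha> \<nu> x = (\<Sum>k<m. ?D k) + ?D m"
    by simp
  then have "(?c ^ m - (\<Sum>k<m. ?c ^ k)) * h \<le> \<bar>K_fun \<alpha> \<nu> (x + h) - K_fun \<alpha> \<nu> x\<bar>"
    using top low by (simp add: left_diff_distrib)
  then show ?thesis
    using \<open>0 < h\<close> by (simp add: pos_le_divide_eq)
qed

lemma K_ratio_gt_2:
  assumes "\<alpha> < 1" "1 / (1 - \<alpha>) < 2 * real \<nu>"
  shows "2 < K_ratio \<alpha> \<nu>"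
proof -
  have "2 powr 1 < 2 powr (2 * real \<nu> * (1 - \<alpha>))"
    using assms by (intro powr_less_mono) (simp_all add: field_simps)
  then show ?thesis
    by (simp add: K_ratio_def)
qed

lemma K_const_nonneg: "2 < K_ratio \<alpha> \<nu> \<Longrightarrow> 0 \<le> K_const m \<nu> \<alpha>"
  unfolding K_const_def K_ratio_def[symmetric] by (intro mult_nonneg_nonneg divide_nonneg_nonneg) auto

lemma continuous_on_K_fun_diff:
  assumes "0 < \<alpha>" "0 < \<nu>"
  shows "continuous_on S (\<lambda>x. K_fun \<alpha> \<nu> (x + 1 / 2 ^ (2 * \<nu> * m + 1)) - K_fun \<alpha> \<nu> x)"
  by (simp only: K_fun_diff_eq_sum[OF assms]) (intro continuous_intros)

theorem proposition1:
  fixes \<alpha> M :: real and \<nu> m :: nat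
  assumes "0 < \<alpha>" "\<alpha> < 1"
    and "2 * real \<nu> > 1 / (1 - \<alpha>)"
    and "M \<ge> 1"
  shows "1 / (2 * M) * integral {-M..M}
           (\<lambda>x. \<bar>(K_fun \<alpha> \<nu> (x + 1 / 2 ^ (2 * \<nu> * m + 1)) - K_fun \<alpha> \<nu> x)
                  / (1 / 2 ^ (2 * \<nu> * m + 1))\<bar>)
         \<ge> 1 / 4 * K_const m \<nu> \<alpha>"
proof -
  define f where "f x = \<bar>(K_fun \<alpha> \<nu> (x + 1 / 2 ^ (2 * \<nu> * m + 1)) - K_fun \<alpha> \<nu> x)
    / (1 / 2 ^ (2 * \<nu> * m + 1))\<bar>" for x
  have ratio: "2 < K_ratio \<alpha> \<nu>"
    using assms(2,3) by (rule K_ratio_gt_2)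
  then have "0 < \<nu>"
    by (cases \<nu>) (simp_all add: K_ratio_def)
  have "f integrable_on {a..b}" for a b
    unfolding f_def by (intro integrable_continuous_interval continuous_on_rabs continuous_on_divide
        continuous_on_K_fun_diff[OF assms(1) \<open>0 < \<nu>\<close>] continuous_on_const) auto
  moreover have "K_const m \<nu> \<alpha> \<le> f x"
    if "real_of_int j * (1 / 2 ^ (2 * \<nu> * m)) \<le> x" "x \<le> (real_of_int j + 1/2) * (1 / 2 ^ (2 * \<nu> * m))" for j x
    using power_diff_geometric_sum_ge[OF ratio, of m] K_fun_diff_quotient_ge[OF assms(1) \<open>0 < \<nu>\<close> that]
    by (simp add: K_const_def K_ratio_def[symmetric] f_def)
  moreover have "1 / 2 ^ (2 * \<nu> * m) \<le> M"
    using assms(4) by (simp add: order_trans[of _ 1])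
  ultimately have "K_const m \<nu> \<alpha> * M / 2 \<le> integral {-M..M} f"
    using K_const_nonneg[OF ratio] by (intro integral_symmetric_ge_half_periods) (auto simp: f_def)
  then show ?thesis
    using assms(4) by (simp add: f_def[abs_def] field_simps)
qed

end
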